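(* Let $h\ge 2$ be an integer and $\lambda_G,\lambda_L,\gamma>0$. Let $S=\{(a,b): a\ge 1,\ b\ge 1,\ a+b\le h\}\cup\{(0,1)^\ast\}$ and let $\mathbf{P}=(p_{s,t})_{s,t\in S}$, $\Phi=(\phi_{s,t})_{s,t\in S}$ be the matrices whose only non-zero entries are as follows: for $(a,b)\in S$ with $a\ge 1$, $p_{(a,b),(a-1,b+1)}=\frac{a\lambda_L}{a\lambda_L+\gamma}$ and $\phi_{(a,b),(a-1,b+1)}=\frac{a\lambda_L}{b(a\lambda_L+\gamma)}$ if $a>1$; $p_{(1,b),(0,1)^\ast}=\frac{\lambda_L}{\lambda_L+\gamma}$ and $\phi_{(1,b),(0,1)^\ast}=\frac{\lambda_L}{b(\lambda_L+\gamma)}$; $p_{(a,b),(a,b-1)}=\frac{(b-1)\gamma}{b(a\lambda_L+\gamma)}$ if $b\ge 2$; $\phi_{(a,b),(h-1,1)}=\frac{\lambda_G}{b(a\lambda_L+\gamma)}$; and $\phi_{(0,1)^\ast,(h-1,1)}=\lambda_G/\gamma$ (the row of $\mathbf{P}$ indexed by $(0,1)^\ast$ is zero). Let $\mathbf{M}=(\mathbf{I}-\mathbf{P})^{-1}\Phi$, let $\mu_G=\lambda_G/\gamma$, let $\mathbf{G}$ be the $S\times S$ matrix with $G_{s,(h-1,1)}=\mu_G$ for all $s\in S$ and all other entries $0$, and let $\mathbf{U}=(u_{s,t})=\mathbf{M}-\mathbf{G}$. For $i=0,1,\ldots,h-1$ let $\mu_i$ be the mean number of infectives in generation $i$ of the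 single-household epidemic described in the context. Then for $i=0,1,\ldots,h-1$, $$\mu_i=\sum_{(c,d)\in S}\big(\mathbf{U}^i\big)_{(h-1,1),(c,d)},$$ i.e. $\mu_i$ equals the sum of the row of $\mathbf{U}^i$ indexed by $(h-1,1)$ (with $\mathbf{U}^0=\mathbf{I}$).
   Context: Single-household Markovian SIR epidemic: a household of $h$ individuals initially contains one infective and $h-1$ susceptibles. Each infective remains infectious for an exponentially distributed time with rate $\gamma$ (independently), during which it makes contacts with each other given household member at the points of independent homogeneous Poisson processes of rate $\lambda_L$; a contacted susceptible immediately becomes infectious; recovered individuals play no further role. Generations: the initial infective is in generation $0$, and an individual infected by an infective of generation $i-1$ is in generation $i$. A state $(a,b)$ denotes a household with $a$ susceptibles and $b$ infectives; the states with no susceptibles are amalgamated into the single state $(0,1)^\ast$. The matrix $\mathbf{M}$ is the mean reproduction matrix, whose entry $m_{s,t}$ is the mean number of type-$t$ infectives generated by an individual who becomes infected as a member of a type-$s$ infectious unit (in the household epidemic model where, in addition, each infective makes global contacts at rate $\lambda_G$, each creating a new household infectious unit in state $(h-1,1)$). *)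

theory Defs
  imports Complex_Main
begin

text \<open>State of the embedded jump chain: number of susceptibles a and the list of
generations of the currently infectious individuals (one list entry per infective).
With b infectives, every infective infects some susceptible at rate a*lL and
recovers at rate g, so the total event rate is b*(a*lL+g).
hh_future lL g i a xs is the expected number of individuals that will be newly
infected in generation i from this state onwards (until the epidemic ends).\<close>

function hh_future :: "real \<Rightarrow> real \<Rightarrow> nat \<Rightarrow> nat \<Rightarrow> nat list \<Rightarrow> real" where
  "hh_future lL g i a xs =
    (if xs = [] then 0 else
     (let b = length xs; R = real b * (real a * lL + g) in
      (\<Sum>k<b. (if 0 < a then
                 real a * lL / R *
                   ((if Suc (xs ! k) = i then 1 else 0)
                    + hh_future lL g i (a - 1) (Suc (xs ! k) # xs))
               else 0)
              + g / R * hh_future lL g i a (take k xs @ drop (Suc k) xs))))"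
  by pat_completeness auto
termination
  by (relation "measure (\<lambda>(lL, g, i, a, xs). 2 * a + length xs)") auto

definition mu_gen :: "real \<Rightarrow> real \<Rightarrow> nat \<Rightarrow> nat \<Rightarrow> real" where
  "mu_gen lL g h i = (if i = 0 then 1 else 0) + hh_future lL g i (h - 1) [0]"

definition mmult :: "'s set \<Rightarrow> ('s \<Rightarrow> 's \<Rightarrow> real) \<Rightarrow> ('s \<Rightarrow> 's \<Rightarrow> real) \<Rightarrow> 's \<Rightarrow> 's \<Rightarrow> real" where
  "mmult S A B = (\<lambda>s t. \<Sum>u\<in>S. A s u * B u t)"

definition mid :: "'s \<Rightarrow> 's \<Rightarrow> real" where
  "mid = (\<lambda>s t. if s = t then 1 else 0)"

fun mpow :: "'s set \<Rightarrow> ('s \<Rightarrow> 's \<Rightarrow> real) \<Rightarrow> nat \<Rightarrow> 's \<Rightarrow> 's \<Rightarrow> real" where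
  "mpow S A 0 = mid"
| "mpow S A (Suc n) = mmult S (mpow S A n) A"

text \<open>Inverse of an S x S matrix (entries outside S x S set to 0 for uniqueness).\<close>
definition minv :: "'s set \<Rightarrow> ('s \<Rightarrow> 's \<Rightarrow> real) \<Rightarrow> 's \<Rightarrow> 's \<Rightarrow> real" where
  "minv S A = (THE B. (\<forall>s\<in>S. \<forall>t\<in>S. mmult S A B s t = mid s t)
                    \<and> (\<forall>s\<in>S. \<forall>t\<in>S. mmult S B A s t = mid s t)
                    \<and> (\<forall>s t. s \<notin> S \<or> t \<notin> S \<longrightarrow> B s t = 0))"

text \<open>States are pairs (a,b); the amalgamated state (0,1)* is encoded as (0,1)
(no other state has a = 0).\<close>
definition hS :: "nat \<Rightarrow> (nat \<times> nat) set" where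
  "hS h = {(a, b). 1 \<le> a \<and> 1 \<le> b \<and> a + b \<le> h} \<union> {(0, 1)}"

definition Pmat :: "nat \<Rightarrow> real \<Rightarrow> real \<Rightarrow> nat \<times> nat \<Rightarrow> nat \<times> nat \<Rightarrow> real" where
  "Pmat h lL g s t =
    (if s \<in> hS h \<and> t \<in> hS h \<and> 1 \<le> fst s then
      (let a = fst s; b = snd s in
        (if 1 < a \<and> t = (a - 1, b + 1) then real a * lL / (real a * lL + g) else 0)
      + (if a = 1 \<and> t = (0, 1) then lL / (lL + g) else 0)
      + (if 2 \<le> b \<and> t = (a, b - 1) then real (b - 1) * g / (real b * (real a * lL + g)) else 0))
     else 0)"

definition Phimat :: "nat \<Rightarrow> real \<Rightarrow> real \<Rightarrow> real \<Rightarrow> nat \<times> nat \<Rightarrow> nat \<times> nat \<Rightarrow> real" where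
  "Phimat h lG lL g s t =
    (if s \<in> hS h \<and> t \<in> hS h then
      (if 1 \<le> fst s then
        (let a = fst s; b = snd s in
          (if 1 < a \<and> t = (a - 1, b + 1) then real a * lL / (real b * (real a * lL + g)) else 0)
        + (if a = 1 \<and> t = (0, 1) then lL / (real b * (lL + g)) else 0)
        + (if t = (h - 1, 1) then lG / (real b * (real a * lL + g)) else 0))
       else (if t = (h - 1, 1) then lG / g else 0))
     else 0)"

definition Mmat :: "nat \<Rightarrow> real \<Rightarrow> real \<Rightarrow> real \<Rightarrow> nat \<times> nat \<Rightarrow> nat \<times> nat \<Rightarrow> real" where
  "Mmat h lG lL g =
     mmult (hS h) (minv (hS h) (\<lambda>s t. mid s t - Pmat h lL g s t)) (Phimat h lG lL g)"

definition Gmat :: "nat \<Rightarrow> real \<Rightarrow> real \<Rightarrow> nat \<times> nat \<Rightarrow> nat \<times> nat \<Rightarrow> real" where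
  "Gmat h lG g s t = (if s \<in> hS h \<and> t = (h - 1, 1) then lG / g else 0)"

definition Umat :: "nat \<Rightarrow> real \<Rightarrow> real \<Rightarrow> real \<Rightarrow> nat \<times> nat \<Rightarrow> nat \<times> nat \<Rightarrow> real" where
  "Umat h lG lL g = (\<lambda>s t. Mmat h lG lL g s t - Gmat h lG g s t)"

end

theory Submission
  imports Defs
begin

(*
  Every transition of the jump chain lowers 2a + b, so P is nilpotent and I - P is invertible,
  its inverse being the Neumann series. Let Phi_0 be Phi with lG = 0, the within-household part
  of Phi. Since each row (a,b) of P sums to 1 - g/(b(a lL + g)), the global entries of Phi are
  exactly (I - P) G, so U = M - G = (I - P)^-1 Phi_0: U does not involve global contacts at all.
  Hence the row sums w_m of U^m satisfy w_(m+1) = P w_(m+1) + Phi_0 w_m, a first-step equation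
  saying that w_m(a,b) is the mean number of generation-m descendants, within the household, of
  one designated infective among the b infectives of state (a,b). The expected number of
  generation-i infections still to come from a household state is therefore the sum of w_(i-x)
  over its infectives of generation x < i; this is checked against the recursion defining
  hh_future by induction on 2a + b, and at the initial state it gives mu_i.
*)

section \<open>Matrices indexed by a finite set\<close>

lemma mmult_assoc:
  assumes "finite S"
  shows "mmult S (mmult S A B) C = mmult S A (mmult S B C)"
proof (intro ext)
  fix s t
  have "mmult S (mmult S A B) C s t = (\<Sum>u\<in>S. \<Sum>v\<in>S. A s v * B v u * C u t)"
    by (simp add: mmult_def sum_distrib_right)
  also have "\<dots> = (\<Sum>v\<in>S. \<Sum>u\<in>S. A s v * B v u * C u t)"
    by (rule sum.swap)
  also have "\<dots> = mmult S A (mmult S B C) s t"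
    by (simp add: mmult_def sum_distrib_left mult.assoc)
  finally show "mmult S (mmult S A B) C s t = mmult S A (mmult S B C) s t" .
qed

lemma mmult_mid_left: "finite S \<Longrightarrow> s \<in> S \<Longrightarrow> mmult S mid A s t = A s t"
  by (simp add: mmult_def mid_def if_distrib if_distribR cong: if_cong)

lemma mmult_mid_right: "finite S \<Longrightarrow> t \<in> S \<Longrightarrow> mmult S A mid s t = A s t"
  by (simp add: mmult_def mid_def if_distrib if_distribR cong: if_cong)

lemma mpow_Suc_left:
  assumes "finite S" "s \<in> S" "t \<in> S"
  shows "mpow S A (Suc n) s t = mmult S A (mpow S A n) s t"
  using assms(2,3)
proof (induction n arbitrary: s t)
  case 0
  then show ?case using assms(1) by (simp add: mmult_mid_left mmult_mid_right)
next
  case (Suc n)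
  have "mpow S A (Suc (Suc n)) s t = mmult S (mmult S A (mpow S A n)) A s t"
    using Suc by (simp add: mmult_def)
  also have "\<dots> = mmult S A (mpow S A (Suc n)) s t"
    using assms(1) by (simp add: mmult_assoc)
  finally show ?case .
qed

lemma mpow_eq_0_outside: "s \<notin> S \<Longrightarrow> t \<in> S \<Longrightarrow> mpow S A n s t = 0"
  by (induction n arbitrary: t) (auto simp: mid_def mmult_def)

lemma sum_mpow_Suc:
  assumes "finite S" "s \<in> S"
  shows "(\<Sum>t\<in>S. mpow S A (Suc n) s t) = (\<Sum>u\<in>S. A s u * (\<Sum>t\<in>S. mpow S A n u t))"
proof -
  have "(\<Sum>t\<in>S. mpow S A (Suc n) s t) = (\<Sum>t\<in>S. \<Sum>u\<in>S. A s u * mpow S A n u t)"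
    by (intro sum.cong refl) (simp only: mpow_Suc_left[OF assms] mmult_def)
  also have "\<dots> = (\<Sum>u\<in>S. A s u * (\<Sum>t\<in>S. mpow S A n u t))"
    by (subst sum.swap) (simp add: sum_distrib_left)
  finally show ?thesis .
qed

definition minverse :: "'s set \<Rightarrow> ('s \<Rightarrow> 's \<Rightarrow> real) \<Rightarrow> ('s \<Rightarrow> 's \<Rightarrow> real) \<Rightarrow> bool" where
  "minverse S A B \<longleftrightarrow> (\<forall>s\<in>S. \<forall>t\<in>S. mmult S A B s t = mid s t)
                    \<and> (\<forall>s\<in>S. \<forall>t\<in>S. mmult S B A s t = mid s t)
                    \<and> (\<forall>s t. s \<notin> S \<or> t \<notin> S \<longrightarrow> B s t = 0)"

lemma mmult_minverse_left:
  assumes "finite S" "minverse S A B" "s \<in> S"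
  shows "mmult S B (mmult S A C) s t = C s t"
proof -
  have "mmult S B (mmult S A C) s t = mmult S (mmult S B A) C s t"
    using assms(1) by (simp add: mmult_assoc)
  also have "\<dots> = mmult S mid C s t"
    unfolding mmult_def[of S _ C] using assms(2,3) by (auto simp: minverse_def intro!: sum.cong)
  finally show ?thesis using assms(1,3) by (simp add: mmult_mid_left)
qed

lemma mmult_minverse_right:
  assumes "finite S" "minverse S A B" "s \<in> S"
  shows "mmult S A (mmult S B C) s t = C s t"
proof -
  have "mmult S A (mmult S B C) s t = mmult S (mmult S A B) C s t"
    using assms(1) by (simp add: mmult_assoc)
  also have "\<dots> = mmult S mid C s t"
    unfolding mmult_def[of S _ C] using assms(2,3) by (auto simp: minverse_def intro!: sum.cong)
  finally show ?thesis using assms(1,3) by (simp add: mmult_mid_left)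
qed

lemma minverse_unique:
  assumes "finite S" "minverse S A B" "minverse S A B'"
  shows "B' = B"
proof (intro ext)
  fix s t
  show "B' s t = B s t"
  proof (cases "s \<in> S \<and> t \<in> S")
    case True
    have "B s t = mmult S B' (mmult S A B) s t"
      using assms True by (simp add: mmult_minverse_left)
    also have "\<dots> = mmult S B' mid s t"
      unfolding mmult_def[of S B'] using assms(2) True by (auto simp: minverse_def intro!: sum.cong)
    also have "\<dots> = B' s t"
      using assms(1) True by (simp add: mmult_mid_right)
    finally show ?thesis ..
  qed (use assms in \<open>auto simp: minverse_def\<close>)
qed

lemma minv_eqI: "finite S \<Longrightarrow> minverse S A B \<Longrightarrow> minv S A = B"
  unfolding minv_def minverse_def[symmetric] by (blast intro: minverse_unique)

lemma mmult_one_minus_left: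
  "finite S \<Longrightarrow> s \<in> S \<Longrightarrow>
    mmult S (\<lambda>s t. mid s t - P s t) X s t = X s t - (\<Sum>u\<in>S. P s u * X u t)"
  using mmult_mid_left[of S s X t]
  by (simp add: mmult_def left_diff_distrib sum_subtractf)

lemma mmult_one_minus_right:
  "finite S \<Longrightarrow> t \<in> S \<Longrightarrow>
    mmult S X (\<lambda>s t. mid s t - P s t) s t = X s t - (\<Sum>u\<in>S. X s u * P u t)"
  using mmult_mid_right[of S t X s]
  by (simp add: mmult_def right_diff_distrib sum_subtractf)

lemma minverse_one_minus_nilpotent:
  assumes fin: "finite S"
    and nil: "\<And>s t. s \<in> S \<Longrightarrow> t \<in> S \<Longrightarrow> mpow S P N s t = 0"
  shows "minverse S (\<lambda>s t. mid s t - P s t)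
           (\<lambda>s t. if s \<in> S \<and> t \<in> S then \<Sum>k<N. mpow S P k s t else 0)"
    (is "minverse S ?A ?B")
proof -
  have telescope: "(\<Sum>k<N. mpow S P k s t - mpow S P (Suc k) s t) = mid s t"
    if "s \<in> S" "t \<in> S" for s t
    using sum_lessThan_telescope'[of "\<lambda>k. mpow S P k s t" N] that by (simp add: nil)
  have "mmult S ?A ?B s t = mid s t" if st: "s \<in> S" "t \<in> S" for s t
  proof -
    have "mmult S ?A ?B s t = ?B s t - (\<Sum>u\<in>S. P s u * ?B u t)"
      using fin st(1) by (rule mmult_one_minus_left)
    also have "(\<Sum>u\<in>S. P s u * ?B u t) = (\<Sum>k<N. mpow S P (Suc k) s t)"
      using fin st
      by (simp add: mpow_Suc_left mmult_def sum_distrib_left sum.swap[of _ S] del: mpow.simps(2))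
    finally show ?thesis using st telescope by (simp add: sum_subtractf)
  qed
  moreover have "mmult S ?B ?A s t = mid s t" if st: "s \<in> S" "t \<in> S" for s t
  proof -
    have "mmult S ?B ?A s t = ?B s t - (\<Sum>u\<in>S. ?B s u * P u t)"
      using fin st(2) by (rule mmult_one_minus_right)
    also have "(\<Sum>u\<in>S. ?B s u * P u t) = (\<Sum>k<N. mpow S P (Suc k) s t)"
      using fin st by (simp add: mmult_def sum_distrib_right sum.swap[of _ S])
    finally show ?thesis using st telescope by (simp add: sum_subtractf)
  qed
  ultimately show ?thesis by (simp add: minverse_def)
qed

lemma minverse_resolvent:
  assumes "finite S" "minverse S (\<lambda>s t. mid s t - P s t) B" "s \<in> S"
  shows "mmult S B C s t = C s t + (\<Sum>u\<in>S. P s u * mmult S B C u t)"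
proof -
  have "C s t = mmult S (\<lambda>s t. mid s t - P s t) (mmult S B C) s t"
    using assms by (simp add: mmult_minverse_right)
  also have "\<dots> = mmult S B C s t - (\<Sum>u\<in>S. P s u * mmult S B C u t)"
    using assms(1,3) by (rule mmult_one_minus_left)
  finally show ?thesis by simp
qed

lemma mpow_eq_0_if_rank_decreasing:
  fixes rk :: "'s \<Rightarrow> nat"
  assumes decr: "\<And>s t. P s t \<noteq> 0 \<Longrightarrow> rk t < rk s" and "rk s < k"
  shows "mpow S P k s t = 0"
proof -
  have "mpow S P n s t \<noteq> 0 \<Longrightarrow> rk t + n \<le> rk s" for n t
  proof (induction n arbitrary: t)
    case 0
    then show ?case by (simp add: mid_def split: if_splits)
  next
    case (Suc n)
    then have "(\<Sum>u\<in>S. mpow S P n s u * P u t) \<noteq> 0"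
      by (simp add: mmult_def)
    then obtain u where "mpow S P n s u * P u t \<noteq> 0"
      by (rule sum.not_neutral_contains_not_neutral)
    with Suc.IH[of u] decr[of u t] show ?case by simp
  qed
  with \<open>rk s < k\<close> show ?thesis by fastforce
qed

section \<open>The household matrices\<close>

lemma mem_hS: "(a, b) \<in> hS h \<longleftrightarrow> 1 \<le> a \<and> 1 \<le> b \<and> a + b \<le> h \<or> (a, b) = (0, 1)"
  by (auto simp: hS_def)

lemma finite_hS: "finite (hS h)"
  by (rule finite_subset[of _ "{..h} \<times> {..h+1}"]) (auto simp: hS_def)

lemma hS_cases:
  assumes "s \<in> hS h"
  obtains "s = (0, 1)" | a b where "s = (a, b)" "1 \<le> a" "1 \<le> b" "a + b \<le> h"
  using assms by (auto simp: hS_def)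

definition after_infection :: "nat \<times> nat \<Rightarrow> nat \<times> nat" where
  "after_infection s = (if 1 < fst s then (fst s - 1, snd s + 1) else (0, 1))"

lemma after_infection_in_hS: "(a, b) \<in> hS h \<Longrightarrow> after_infection (a, b) \<in> hS h"
  by (auto simp: after_infection_def mem_hS)

lemma Pmat_amalgamated_row: "Pmat h lL g (0, 1) u = 0"
  by (simp add: Pmat_def)

lemma Pmat_row:
  assumes "(a, b) \<in> hS h" "1 \<le> a"
  shows "Pmat h lL g (a, b) u =
    (if u = after_infection (a, b) then real a * lL / (real a * lL + g) else 0)
  + (if u = (a, b - 1) \<and> 2 \<le> b then real (b - 1) * g / (real b * (real a * lL + g)) else 0)"
  using assms unfolding Pmat_def after_infection_def by (cases "a = 1") (auto simp: mem_hS)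

lemma Phimat_amalgamated_row: "Phimat h lG lL g (0, 1) u = (if u = (h - 1, 1) then lG / g else 0)"
  by (auto simp: Phimat_def mem_hS)

lemma Phimat_row:
  assumes "(a, b) \<in> hS h" "1 \<le> a"
  shows "Phimat h lG lL g (a, b) u =
    (if u = after_infection (a, b) then real a * lL / (real b * (real a * lL + g)) else 0)
  + (if u = (h - 1, 1) then lG / (real b * (real a * lL + g)) else 0)"
  using assms unfolding Phimat_def after_infection_def by (cases "a = 1") (auto simp: mem_hS)

lemma sum_Pmat_row:
  assumes "(a, b) \<in> hS h" "1 \<le> a"
  shows "(\<Sum>u\<in>hS h. Pmat h lL g (a, b) u * F u) =
    real a * lL / (real a * lL + g) * F (after_infection (a, b))
  + real (b - 1) * g / (real b * (real a * lL + g)) * F (a, b - 1)"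
  using assms after_infection_in_hS[OF assms(1)] finite_hS[of h]
  by (cases "b = 1")
    (auto simp: Pmat_row distrib_right sum.distrib if_distrib[of "\<lambda>x. x * _"] mem_hS cong: if_cong)

lemma sum_Phimat_row:
  assumes "(a, b) \<in> hS h" "1 \<le> a"
  shows "(\<Sum>u\<in>hS h. Phimat h lG lL g (a, b) u * F u) =
    real a * lL / (real b * (real a * lL + g)) * F (after_infection (a, b))
  + lG / (real b * (real a * lL + g)) * F (h - 1, 1)"
  using assms after_infection_in_hS[OF assms(1)] finite_hS[of h]
  by (auto simp: Phimat_row distrib_right sum.distrib if_distrib[of "\<lambda>x. x * _"] mem_hS
      cong: if_cong)

lemma Pmat_rank_decreasing: "Pmat h lL g s t \<noteq> 0 \<Longrightarrow> 2 * fst t + snd t < 2 * fst s + snd s"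
  unfolding Pmat_def Let_def by (simp split: if_split_asm)

lemma Pmat_nilpotent: "s \<in> hS h \<Longrightarrow> mpow (hS h) (Pmat h lL g) (2 * h + 2) s t = 0"
  by (rule mpow_eq_0_if_rank_decreasing[where rk = "\<lambda>s. 2 * fst s + snd s"])
    (auto simp: Pmat_rank_decreasing hS_def)

lemma minverse_Pmat:
  "minverse (hS h) (\<lambda>s t. mid s t - Pmat h lL g s t)
     (minv (hS h) (\<lambda>s t. mid s t - Pmat h lL g s t))"
proof -
  have "minverse (hS h) (\<lambda>s t. mid s t - Pmat h lL g s t)
      (\<lambda>s t. if s \<in> hS h \<and> t \<in> hS h
              then \<Sum>k<2 * h + 2. mpow (hS h) (Pmat h lL g) k s t else 0)"
    by (rule minverse_one_minus_nilpotent[OF finite_hS]) (rule Pmat_nilpotent)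
  then show ?thesis
    using minv_eqI[OF finite_hS] by simp
qed

lemma Mmat_resolvent:
  "s \<in> hS h \<Longrightarrow>
    Mmat h lG lL g s t = Phimat h lG lL g s t + (\<Sum>u\<in>hS h. Pmat h lL g s u * Mmat h lG lL g u t)"
  unfolding Mmat_def by (rule minverse_resolvent[OF finite_hS minverse_Pmat])

locale household =
  fixes h :: nat and lL g :: real
  assumes lL_nonneg: "0 \<le> lL" and g_pos: "0 < g"
begin

lemma rate_pos: "0 < real a * lL + g"
  using lL_nonneg g_pos by (simp add: add_nonneg_pos)

lemma Pmat_row_sum:
  assumes "(a, b) \<in> hS h" "1 \<le> a"
  shows "(\<Sum>u\<in>hS h. Pmat h lL g (a, b) u) = 1 - g / (real b * (real a * lL + g))"
proof -
  have "1 \<le> b" using assms(1) by (auto simp: mem_hS)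
  then have "real a * lL / (real a * lL + g) + real (b - 1) * g / (real b * (real a * lL + g))
      = 1 - g / (real b * (real a * lL + g))"
    using rate_pos[of a] by (simp add: divide_simps of_nat_diff) (simp add: algebra_simps)
  then show ?thesis
    using sum_Pmat_row[OF assms, of lL g "\<lambda>_. 1"] by simp
qed

lemma Phimat_split:
  assumes "s \<in> hS h"
  shows "Phimat h lG lL g s t =
    Phimat h 0 lL g s t + mmult (hS h) (\<lambda>s t. mid s t - Pmat h lL g s t) (Gmat h lG g) s t"
proof -
  have G: "Gmat h lG g u t = (if t = (h - 1, 1) then lG / g else 0)" if "u \<in> hS h" for u
    using that by (simp add: Gmat_def)
  have IPG: "mmult (hS h) (\<lambda>s t. mid s t - Pmat h lL g s t) (Gmat h lG g) s t
      = (if t = (h - 1, 1) then lG / g * (1 - (\<Sum>u\<in>hS h. Pmat h lL g s u)) else 0)"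
    using assms by (simp add: mmult_one_minus_left[OF finite_hS] G sum_distrib_right[symmetric]
        right_diff_distrib cong: sum.cong)
  from assms show ?thesis
  proof (cases rule: hS_cases)
    case 1
    show ?thesis
      using IPG unfolding 1 Phimat_amalgamated_row Pmat_amalgamated_row by simp
  next
    case (2 a b)
    then have ab: "(a, b) \<in> hS h" using assms by simp
    show ?thesis
      using IPG rate_pos[of a] g_pos unfolding 2(1) Pmat_row_sum[OF ab 2(2)] Phimat_row[OF ab 2(2)]
      by (simp add: field_simps)
  qed
qed

lemma Umat_eq_Mmat_no_global: "Umat h lG lL g = Mmat h 0 lL g"
proof (intro ext)
  fix s t
  let ?IP = "\<lambda>s t. mid s t - Pmat h lL g s t"
  let ?B = "minv (hS h) ?IP"
  show "Umat h lG lL g s t = Mmat h 0 lL g s t"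
  proof (cases "s \<in> hS h")
    case True
    have "Mmat h lG lL g s t =
        mmult (hS h) ?B (\<lambda>v t. Phimat h 0 lL g v t + mmult (hS h) ?IP (Gmat h lG g) v t) s t"
      unfolding Mmat_def mmult_def[of _ ?B]
      by (intro sum.cong refl) (simp add: Phimat_split[where lG = lG])
    also have "\<dots> = Mmat h 0 lL g s t + mmult (hS h) ?B (mmult (hS h) ?IP (Gmat h lG g)) s t"
      unfolding Mmat_def mmult_def[of _ ?B] by (simp add: distrib_left sum.distrib)
    also have "\<dots> = Mmat h 0 lL g s t + Gmat h lG g s t"
      using mmult_minverse_left[OF finite_hS minverse_Pmat True] by simp
    finally show ?thesis by (simp add: Umat_def)
  next
    case False
    then have "?B s v = 0" for v
      using minverse_Pmat[of h lL g] unfolding minverse_def by blast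
    with False show ?thesis by (simp add: Umat_def Mmat_def mmult_def Gmat_def)
  qed
qed

end

section \<open>Generations in the household epidemic\<close>

lemma sum_list_map_conv_sum_nth: "sum_list (map f xs) = (\<Sum>k<length xs. f (xs ! k))"
  by (induction xs) (simp_all add: sum.lessThan_Suc_shift del: sum.lessThan_Suc)

lemma sum_list_map_remove_nth:
  fixes f :: "'a \<Rightarrow> 'b :: ab_group_add"
  shows "k < length xs \<Longrightarrow>
    sum_list (map f (take k xs @ drop (Suc k) xs)) = sum_list (map f xs) - f (xs ! k)"
  by (subst (2) id_take_nth_drop[of k xs]) simp_all

lemma sum_redistribute:
  fixes c e :: real
  shows "(\<Sum>k<n. c * (A k + (\<Sum>j<n. F j)) + e * ((\<Sum>j<n. G j) - G k))
       = (\<Sum>k<n. c * (A k + real n * F k) + (real n - 1) * e * G k)"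
  by (simp add: sum.distrib sum_subtractf distrib_left right_diff_distrib left_diff_distrib
      sum_distrib_left[symmetric] mult.left_commute)

context household
begin

definition mean_descendants :: "nat \<Rightarrow> nat \<times> nat \<Rightarrow> real" where
  "mean_descendants m s = (\<Sum>t\<in>hS h. mpow (hS h) (Mmat h 0 lL g) m s t)"

lemma mean_descendants_0: "s \<in> hS h \<Longrightarrow> mean_descendants 0 s = 1"
  by (simp add: mean_descendants_def mid_def finite_hS)

lemma mean_descendants_Suc_Mmat:
  "s \<in> hS h \<Longrightarrow>
    mean_descendants (Suc m) s = (\<Sum>u\<in>hS h. Mmat h 0 lL g s u * mean_descendants m u)"
  unfolding mean_descendants_def by (rule sum_mpow_Suc[OF finite_hS])

lemma mean_descendants_Suc_resolvent:
  assumes "s \<in> hS h"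
  shows "mean_descendants (Suc m) s =
    (\<Sum>u\<in>hS h. Phimat h 0 lL g s u * mean_descendants m u)
  + (\<Sum>v\<in>hS h. Pmat h lL g s v * mean_descendants (Suc m) v)"
proof -
  let ?w = "mean_descendants m"
  have "mean_descendants (Suc m) s = (\<Sum>u\<in>hS h. Mmat h 0 lL g s u * ?w u)"
    using assms by (rule mean_descendants_Suc_Mmat)
  also have "\<dots> = (\<Sum>u\<in>hS h.
      (Phimat h 0 lL g s u + (\<Sum>v\<in>hS h. Pmat h lL g s v * Mmat h 0 lL g v u)) * ?w u)"
    using Mmat_resolvent[OF assms] by (intro sum.cong refl) presburger
  also have "\<dots> = (\<Sum>u\<in>hS h. Phimat h 0 lL g s u * ?w u)
      + (\<Sum>v\<in>hS h. Pmat h lL g s v * (\<Sum>u\<in>hS h. Mmat h 0 lL g v u * ?w u))"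
    unfolding distrib_right sum.distrib sum_distrib_left sum_distrib_right mult.assoc
    by (subst (2) sum.swap) (rule refl)
  also have "\<dots> = (\<Sum>u\<in>hS h. Phimat h 0 lL g s u * ?w u)
      + (\<Sum>v\<in>hS h. Pmat h lL g s v * mean_descendants (Suc m) v)"
    by (simp add: mean_descendants_Suc_Mmat)
  finally show ?thesis .
qed

lemma mean_descendants_Suc_no_susceptibles: "mean_descendants (Suc m) (0, b) = 0"
proof (cases "b = 1")
  case True
  have "(0, 1) \<in> hS h" by (simp add: mem_hS)
  from mean_descendants_Suc_resolvent[OF this, of m] True show ?thesis
    unfolding Phimat_amalgamated_row Pmat_amalgamated_row by (simp cong: if_cong)
next
  case False
  then have "(0, b) \<notin> hS h" by (simp add: mem_hS)
  then show ?thesis by (simp add: mean_descendants_def mpow_eq_0_outside del: mpow.simps)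
qed

lemma mean_descendants_Suc:
  assumes "(a, b) \<in> hS h" "1 \<le> a"
  defines "R \<equiv> real b * (real a * lL + g)"
  shows "mean_descendants (Suc m) (a, b) =
    real a * lL / R *
      (mean_descendants m (after_infection (a, b))
       + real b * mean_descendants (Suc m) (after_infection (a, b)))
  + (real b - 1) * (g / R) * mean_descendants (Suc m) (a, b - 1)"
proof -
  have "1 \<le> b" using assms(1) by (auto simp: mem_hS)
  then have "real a * lL / (real a * lL + g) = real a * lL / R * real b"
    and "real (b - 1) * g / R = (real b - 1) * (g / R)"
    using rate_pos[of a] by (simp_all add: R_def of_nat_diff)
  with mean_descendants_Suc_resolvent[OF assms(1), of m] show ?thesis
    unfolding sum_Phimat_row[OF assms(1,2)] sum_Pmat_row[OF assms(1,2)] R_def[symmetric]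
    by (simp only: distrib_left mult.assoc add.assoc)
qed

definition gen_descendants :: "nat \<Rightarrow> nat \<Rightarrow> nat \<Rightarrow> nat \<Rightarrow> real" where
  "gen_descendants i a b x = (if x < i \<and> 0 < a then mean_descendants (i - x) (a, b) else 0)"

lemma gen_descendants_step:
  assumes "1 \<le> b" "a + b \<le> h"
  defines "R \<equiv> real b * (real a * lL + g)"
  shows "gen_descendants i a b x =
    real a * lL / R *
      ((if Suc x = i then 1 else 0) + gen_descendants i (a - 1) (b + 1) (Suc x)
       + real b * gen_descendants i (a - 1) (b + 1) x)
  + (real b - 1) * (g / R) * gen_descendants i a (b - 1) x"
proof (cases "x < i \<and> 0 < a")
  case False
  then show ?thesis by (auto simp: gen_descendants_def)
next
  case True
  define m where "m = i - Suc x"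
  with True have m: "i - x = Suc m" by (simp add: Suc_diff_Suc)
  have ab: "(a, b) \<in> hS h" "1 \<le> a"
    using assms True by (auto simp: mem_hS)
  have "(if Suc x = i then 1 else 0) + gen_descendants i (a - 1) (b + 1) (Suc x)
      = mean_descendants m (after_infection (a, b))"
  proof (cases m)
    case 0
    with m True have "Suc x = i" by arith
    then show ?thesis
      using mean_descendants_0[OF after_infection_in_hS[OF ab(1)]] 0 by (simp add: gen_descendants_def)
  next
    case (Suc m')
    with m have "Suc x < i" "i - Suc x = m" by arith+
    with Suc True show ?thesis
      by (simp add: gen_descendants_def after_infection_def mean_descendants_Suc_no_susceptibles)
  qed
  moreover have "gen_descendants i (a - 1) (b + 1) x = mean_descendants (Suc m) (after_infection (a, b))"
    using m True
    by (simp add: gen_descendants_def after_infection_def mean_descendants_Suc_no_susceptibles)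
  moreover have "gen_descendants i a (b - 1) x = mean_descendants (Suc m) (a, b - 1)"
    and "gen_descendants i a b x = mean_descendants (Suc m) (a, b)"
    using m True by (simp_all add: gen_descendants_def)
  ultimately show ?thesis
    unfolding R_def by (simp only: mean_descendants_Suc[OF ab])
qed

lemma sum_gen_descendants_recursion:
  fixes i a :: nat and xs :: "nat list"
  assumes "a + length xs \<le> h"
  defines "b \<equiv> length xs" and "R \<equiv> real (length xs) * (real a * lL + g)"
  defines "D1 \<equiv> gen_descendants i (a - 1) (b + 1)" and "D2 \<equiv> gen_descendants i a (b - 1)"
  shows "(\<Sum>x\<leftarrow>xs. gen_descendants i a b x) = (\<Sum>k<b.
      real a * lL / R * ((if Suc (xs ! k) = i then 1 else 0) + D1 (Suc (xs ! k)) + (\<Sum>x\<leftarrow>xs. D1 x))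
    + g / R * ((\<Sum>x\<leftarrow>xs. D2 x) - D2 (xs ! k)))"
proof -
  have "(\<Sum>x\<leftarrow>xs. gen_descendants i a b x) = (\<Sum>k<b. gen_descendants i a b (xs ! k))"
    unfolding b_def by (rule sum_list_map_conv_sum_nth)
  also have "\<dots> = (\<Sum>k<b.
      real a * lL / R * ((if Suc (xs ! k) = i then 1 else 0) + D1 (Suc (xs ! k)) + real b * D1 (xs ! k))
    + (real b - 1) * (g / R) * D2 (xs ! k))"
    using assms(1) unfolding D1_def D2_def R_def b_def
    by (intro sum.cong refl gen_descendants_step) (auto simp: Suc_le_eq)
  also have "\<dots> = (\<Sum>k<b.
      real a * lL / R * ((if Suc (xs ! k) = i then 1 else 0) + D1 (Suc (xs ! k)) + (\<Sum>j<b. D1 (xs ! j)))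
    + g / R * ((\<Sum>j<b. D2 (xs ! j)) - D2 (xs ! k)))"
    by (rule sum_redistribute[symmetric])
  finally show ?thesis
    unfolding b_def sum_list_map_conv_sum_nth .
qed

lemma hh_future_eq_sum_gen_descendants:
  "a + length xs \<le> h \<Longrightarrow>
    hh_future lL g i a xs = (\<Sum>x\<leftarrow>xs. gen_descendants i a (length xs) x)"
proof (induction "2 * a + length xs" arbitrary: a xs rule: less_induct)
  case less
  define b R where "b = length xs" and "R = real (length xs) * (real a * lL + g)"
  define D1 D2 where "D1 = gen_descendants i (a - 1) (b + 1)" and "D2 = gen_descendants i a (b - 1)"
  have infect: "(if 0 < a then real a * lL / R *
        ((if Suc (xs ! k) = i then 1 else 0) + hh_future lL g i (a - 1) (Suc (xs ! k) # xs)) else 0)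
      = real a * lL / R * ((if Suc (xs ! k) = i then 1 else 0) + D1 (Suc (xs ! k)) + (\<Sum>x\<leftarrow>xs. D1 x))"
    for k
  proof (cases "a = 0")
    case False
    have "hh_future lL g i (a - 1) (Suc (xs ! k) # xs)
        = (\<Sum>x\<leftarrow>Suc (xs ! k) # xs. gen_descendants i (a - 1) (length (Suc (xs ! k) # xs)) x)"
      using less.prems False by (intro less.hyps) auto
    with False show ?thesis by (simp add: D1_def b_def add.assoc)
  qed simp
  have recover: "hh_future lL g i a (take k xs @ drop (Suc k) xs) = (\<Sum>x\<leftarrow>xs. D2 x) - D2 (xs ! k)"
    if "k < b" for k
  proof -
    have "hh_future lL g i a (take k xs @ drop (Suc k) xs)
        = (\<Sum>x\<leftarrow>take k xs @ drop (Suc k) xs.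
            gen_descendants i a (length (take k xs @ drop (Suc k) xs)) x)"
      using less.prems that unfolding b_def by (intro less.hyps) auto
    with that show ?thesis
      unfolding b_def sum_list_map_remove_nth[OF that[unfolded b_def]]
      by (simp add: D2_def b_def)
  qed
  show ?case
  proof (cases "xs = []")
    case True
    then show ?thesis by (simp add: hh_future.simps)
  next
    case False
    have "hh_future lL g i a xs = (\<Sum>k<b.
        (if 0 < a then real a * lL / R *
          ((if Suc (xs ! k) = i then 1 else 0) + hh_future lL g i (a - 1) (Suc (xs ! k) # xs)) else 0)
        + g / R * hh_future lL g i a (take k xs @ drop (Suc k) xs))"
      unfolding b_def R_def by (subst hh_future.simps) (simp only: Let_def False if_False)
    also have "\<dots> = (\<Sum>k<b.
        real a * lL / R * ((if Suc (xs ! k) = i then 1 else 0) + D1 (Suc (xs ! k)) + (\<Sum>x\<leftarrow>xs. D1 x))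
        + g / R * ((\<Sum>x\<leftarrow>xs. D2 x) - D2 (xs ! k)))"
      by (intro sum.cong refl) (simp only: infect recover lessThan_iff)
    also have "\<dots> = (\<Sum>x\<leftarrow>xs. gen_descendants i a (length xs) x)"
      using less.prems unfolding D1_def D2_def R_def b_def
      by (rule sum_gen_descendants_recursion[symmetric])
    finally show ?thesis .
  qed
qed

lemma mu_gen_eq_mean_descendants:
  assumes "0 < h"
  shows "mu_gen lL g h i = mean_descendants i (h - 1, 1)"
proof -
  have "hh_future lL g i (h - 1) [0] = gen_descendants i (h - 1) 1 0"
    using hh_future_eq_sum_gen_descendants[of "h - 1" "[0]" i] assms by simp
  moreover have "(h - 1, 1) \<in> hS h"
    using assms by (auto simp: mem_hS)
  ultimately show ?thesis
    by (cases i) (auto simp: mu_gen_def gen_descendants_def mean_descendants_0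
        mean_descendants_Suc_no_susceptibles)
qed

end

theorem lemma3p2:
  fixes h i :: nat and lG lL g :: real
  assumes "2 \<le> h" and "0 < lG" and "0 < lL" and "0 < g" and "i \<le> h - 1"
  shows "mu_gen lL g h i = (\<Sum>t\<in>hS h. mpow (hS h) (Umat h lG lL g) i (h - 1, 1) t)"
proof -
  interpret household h lL g
    using assms by unfold_locales auto
  have "mu_gen lL g h i = mean_descendants i (h - 1, 1)"
    using assms(1) by (intro mu_gen_eq_mean_descendants) simp
  then show ?thesis
    by (simp add: mean_descendants_def Umat_eq_Mmat_no_global)
qed

end
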